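(* Let the monoid module $S$ over $M$ be $\omega$-bicontinuous. Then for all programs $C$ and initial states $\sigma$, \[ \mathsf{wlp}[C](\mathbf{0})(\sigma) \;=\; \bigwedge_{n\in\mathbb{N}} \ \bigoplus_{\pi \in \mathrm{Paths}^{n}(\langle C,\sigma\rangle)} \mathrm{wgt}(\pi)\otimes \top, \] where $\bigwedge$ denotes the infimum (meet) with respect to the natural order of $S$.
   Context: $M=(M,\odot,1)$ is a monoid of weights and $S=(S,\oplus,\mathbf{0},\otimes)$ an $M$-module: a commutative monoid with an associative, distributive left action $\otimes\colon M\times S\to S$ with $1\otimes a=a$, $v\otimes\mathbf{0}=\mathbf{0}$. Natural order: $a\preceq b$ iff $\exists c:\ a\oplus c=b$. $\omega$-bicontinuous means both the natural order and its reverse are pointed $\omega$-cpos (so there is a greatest element $\top$) and $\oplus,\otimes$ are $\omega$-continuous w.r.t.\ both. $C$ is a weighted guarded-command (wGCL) program (assignments, sequencing, conditionals, binary branching $\{C_1\}\oplus\{C_2\}$, weighting statements $\odot a$ for $a\in M$, while loops); $\mathsf{wlp}$ is the weakest liberal preweighting transformer (the backward weighting-transformer semantics where loops are given by greatest fixed points; for weightings $f\colon\Sigma\to S$, $\mathsf{wlp}[\odot a](f)=a\otimes f$, branching maps to $\oplus$, etc.), and $\mathbf{0}$ here is the constant-$\mathbf{0}$ postweighting. $\mathrm{Paths}^{n}(\langle C,\sigma\rangle)$ is the set of (not necessarily terminating) computation paths of length $n$ in the small-step operational semantics starting in the configuration $\langle C,\sigma\rangle$, and $\mathrm{wgt}(\pi)\in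 M$ is the weight of path $\pi$, the product of the weights collected along it. *)

theory Defs
  imports Main
begin

definition nat_le :: "'s::comm_monoid_add \<Rightarrow> 's \<Rightarrow> bool" where
  "nat_le a b \<longleftrightarrow> (\<exists>c. a + c = b)"

definition is_nat_lub :: "'s::comm_monoid_add set \<Rightarrow> 's \<Rightarrow> bool" where
  "is_nat_lub A s \<longleftrightarrow> (\<forall>a\<in>A. nat_le a s) \<and> (\<forall>u. (\<forall>a\<in>A. nat_le a u) \<longrightarrow> nat_le s u)"

definition is_nat_glb :: "'s::comm_monoid_add set \<Rightarrow> 's \<Rightarrow> bool" where
  "is_nat_glb A s \<longleftrightarrow> (\<forall>a\<in>A. nat_le s a) \<and> (\<forall>u. (\<forall>a\<in>A. nat_le u a) \<longrightarrow> nat_le u s)"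

definition nat_Inf :: "'s::comm_monoid_add set \<Rightarrow> 's" where
  "nat_Inf A = (THE s. is_nat_glb A s)"

definition nat_top :: "'s::comm_monoid_add" where
  "nat_top = (THE t. \<forall>a. nat_le a t)"

definition nat_inc_chain :: "(nat \<Rightarrow> 's::comm_monoid_add) \<Rightarrow> bool" where
  "nat_inc_chain ch \<longleftrightarrow> (\<forall>i. nat_le (ch i) (ch (Suc i)))"

definition nat_dec_chain :: "(nat \<Rightarrow> 's::comm_monoid_add) \<Rightarrow> bool" where
  "nat_dec_chain ch \<longleftrightarrow> (\<forall>i. nat_le (ch (Suc i)) (ch i))"

definition monoid_module :: "('m::monoid_mult \<Rightarrow> 's::comm_monoid_add \<Rightarrow> 's) \<Rightarrow> bool" where
  "monoid_module act \<longleftrightarrow>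
     (\<forall>a. act 1 a = a) \<and>
     (\<forall>u v a. act (u * v) a = act u (act v a)) \<and>
     (\<forall>v a b. act v (a + b) = act v a + act v b) \<and>
     (\<forall>v. act v 0 = 0)"

text \<open>omega-bicontinuity: the natural order and its reverse are pointed omega-cpos
  (reflexivity and transitivity of nat_le hold in every commutative monoid, so the
  partial-order requirement amounts to antisymmetry), and + and the action are
  omega-continuous w.r.t. both orders.\<close>
definition omega_bicontinuous :: "('m::monoid_mult \<Rightarrow> 's::comm_monoid_add \<Rightarrow> 's) \<Rightarrow> bool" where
  "omega_bicontinuous act \<longleftrightarrow>
     (\<forall>a b::'s. nat_le a b \<and> nat_le b a \<longrightarrow> a = b) \<and>
     (\<exists>b::'s. \<forall>a. nat_le b a) \<and>
     (\<forall>ch::nat \<Rightarrow> 's. nat_inc_chain ch \<longrightarrow> (\<exists>s. is_nat_lub (range ch) s)) \<and>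
     (\<exists>t::'s. \<forall>a. nat_le a t) \<and>
     (\<forall>ch::nat \<Rightarrow> 's. nat_dec_chain ch \<longrightarrow> (\<exists>s. is_nat_glb (range ch) s)) \<and>
     (\<forall>(ch::nat \<Rightarrow> 's) b s. nat_inc_chain ch \<longrightarrow> is_nat_lub (range ch) s \<longrightarrow>
          is_nat_lub (range (\<lambda>i. ch i + b)) (s + b)) \<and>
     (\<forall>(ch::nat \<Rightarrow> 's) b s. nat_dec_chain ch \<longrightarrow> is_nat_glb (range ch) s \<longrightarrow>
          is_nat_glb (range (\<lambda>i. ch i + b)) (s + b)) \<and>
     (\<forall>(ch::nat \<Rightarrow> 's) v s. nat_inc_chain ch \<longrightarrow> is_nat_lub (range ch) s \<longrightarrow>
          is_nat_lub (range (\<lambda>i. act v (ch i))) (act v s)) \<and>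
     (\<forall>(ch::nat \<Rightarrow> 's) v s. nat_dec_chain ch \<longrightarrow> is_nat_glb (range ch) s \<longrightarrow>
          is_nat_glb (range (\<lambda>i. act v (ch i))) (act v s))"

datatype ('x, 'v, 'm) wgcl =
    Assign 'x "('x \<Rightarrow> 'v) \<Rightarrow> 'v"
  | Seq "('x, 'v, 'm) wgcl" "('x, 'v, 'm) wgcl"
  | Ite "('x \<Rightarrow> 'v) \<Rightarrow> bool" "('x, 'v, 'm) wgcl" "('x, 'v, 'm) wgcl"
  | Branch "('x, 'v, 'm) wgcl" "('x, 'v, 'm) wgcl"
  | Weight 'm
  | While "('x \<Rightarrow> 'v) \<Rightarrow> bool" "('x, 'v, 'm) wgcl"

definition fun_nat_le :: "('a \<Rightarrow> 's::comm_monoid_add) \<Rightarrow> ('a \<Rightarrow> 's) \<Rightarrow> bool" where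
  "fun_nat_le f g \<longleftrightarrow> (\<forall>x. nat_le (f x) (g x))"

definition nat_gfp :: "(('a \<Rightarrow> 's::comm_monoid_add) \<Rightarrow> ('a \<Rightarrow> 's)) \<Rightarrow> 'a \<Rightarrow> 's" where
  "nat_gfp \<Phi> = (THE X. \<Phi> X = X \<and> (\<forall>Y. \<Phi> Y = Y \<longrightarrow> fun_nat_le Y X))"

primrec wlp :: "('m::monoid_mult \<Rightarrow> 's::comm_monoid_add \<Rightarrow> 's) \<Rightarrow> ('x, 'v, 'm) wgcl
                 \<Rightarrow> (('x \<Rightarrow> 'v) \<Rightarrow> 's) \<Rightarrow> ('x \<Rightarrow> 'v) \<Rightarrow> 's" where
  "wlp act (Assign x e) f = (\<lambda>\<sigma>. f (\<sigma>(x := e \<sigma>)))"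
| "wlp act (Seq C1 C2) f = wlp act C1 (wlp act C2 f)"
| "wlp act (Ite \<phi> C1 C2) f = (\<lambda>\<sigma>. if \<phi> \<sigma> then wlp act C1 f \<sigma> else wlp act C2 f \<sigma>)"
| "wlp act (Branch C1 C2) f = (\<lambda>\<sigma>. wlp act C1 f \<sigma> + wlp act C2 f \<sigma>)"
| "wlp act (Weight a) f = (\<lambda>\<sigma>. act a (f \<sigma>))"
| "wlp act (While \<phi> C) f =
     nat_gfp (\<lambda>X \<sigma>. if \<phi> \<sigma> then wlp act C X \<sigma> else f \<sigma>)"

text \<open>A configuration is (program or None for termination, state, branching history).
  The history records left (True) / right (False) choices so that different branches
  yield different paths.\<close>
type_synonym ('x, 'v, 'm) config = "('x, 'v, 'm) wgcl option \<times> ('x \<Rightarrow> 'v) \<times> bool list"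

inductive step :: "('x, 'v, 'm::monoid_mult) config \<Rightarrow> 'm \<Rightarrow> ('x, 'v, 'm) config \<Rightarrow> bool" where
  assign: "step (Some (Assign x e), \<sigma>, \<beta>) 1 (None, \<sigma>(x := e \<sigma>), \<beta>)"
| weight: "step (Some (Weight a), \<sigma>, \<beta>) a (None, \<sigma>, \<beta>)"
| seq1: "step (Some C1, \<sigma>, \<beta>) a (Some C1', \<sigma>', \<beta>') \<Longrightarrow>
         step (Some (Seq C1 C2), \<sigma>, \<beta>) a (Some (Seq C1' C2), \<sigma>', \<beta>')"
| seq2: "step (Some C1, \<sigma>, \<beta>) a (None, \<sigma>', \<beta>') \<Longrightarrow>
         step (Some (Seq C1 C2), \<sigma>, \<beta>) a (Some C2, \<sigma>', \<beta>')"
| ite_t: "\<phi> \<sigma> \<Longrightarrow> step (Some (Ite \<phi> C1 C2), \<sigma>, \<beta>) 1 (Some C1, \<sigma>, \<beta>)"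
| ite_f: "\<not> \<phi> \<sigma> \<Longrightarrow> step (Some (Ite \<phi> C1 C2), \<sigma>, \<beta>) 1 (Some C2, \<sigma>, \<beta>)"
| branch_l: "step (Some (Branch C1 C2), \<sigma>, \<beta>) 1 (Some C1, \<sigma>, \<beta> @ [True])"
| branch_r: "step (Some (Branch C1 C2), \<sigma>, \<beta>) 1 (Some C2, \<sigma>, \<beta> @ [False])"
| while_t: "\<phi> \<sigma> \<Longrightarrow> step (Some (While \<phi> C), \<sigma>, \<beta>) 1 (Some (Seq C (While \<phi> C)), \<sigma>, \<beta>)"
| while_f: "\<not> \<phi> \<sigma> \<Longrightarrow> step (Some (While \<phi> C), \<sigma>, \<beta>) 1 (None, \<sigma>, \<beta>)"

text \<open>A path from a configuration c is the list of its successive transitions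
  (weight, target configuration). Terminated configurations (None, _, _) have no
  successors.\<close>
fun is_path :: "('x, 'v, 'm::monoid_mult) config \<Rightarrow> ('m \<times> ('x, 'v, 'm) config) list \<Rightarrow> bool" where
  "is_path c [] = True"
| "is_path c ((a, c') # ts) = (step c a c' \<and> is_path c' ts)"

definition paths :: "nat \<Rightarrow> ('x, 'v, 'm::monoid_mult) config \<Rightarrow> ('m \<times> ('x, 'v, 'm) config) list set" where
  "paths n c = {ts. length ts = n \<and> is_path c ts}"

definition wgt :: "('m::monoid_mult \<times> 'c) list \<Rightarrow> 'm" where
  "wgt ts = prod_list (map fst ts)"

end

(*
  Let path_sum n c be the sum of wgt \<pi> \<otimes> \<top> over the paths \<pi> of length n from c. It is \<top>
  for n = 0 and satisfies path_sum (n + 1) c = \<Sum> a \<otimes> path_sum n c' over the transitions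
  c \<rightarrow>a c', so it decreases in n; by continuity of \<oplus> and \<otimes> along decreasing chains, its
  infimum path_inf is again a fixed point of this one-step operator.

  Unfolding wlp along one transition gives the same recursion for wlp C 0, whence
  wlp C 0 \<le> path_sum n by induction on n. Conversely, by induction on C, every post-fixpoint of
  the one-step operator that ignores the branching history and is bounded by f on terminated
  configurations lies below wlp C f: sequential composition transports the post-fixpoint along
  the embedding of the configurations of C1 into those of C1; C2, and a loop is handled by
  coinduction, since its wlp is the greatest fixed point of its characteristic function. That
  greatest fixed point is obtained by Kleene iteration from \<top>, which needs wlp to be monotone
  and continuous along decreasing chains; this is proved by a further induction on programs.
*)

theory Submission
  imports Defs
begin

section \<open>Natural order and continuity\<close>

lemma nat_le_refl [simp]: "nat_le (a::'s::comm_monoid_add) a"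
  unfolding nat_le_def by (rule exI[of _ 0]) simp

lemma nat_le_trans [trans]: "nat_le (a::'s::comm_monoid_add) b \<Longrightarrow> nat_le b c \<Longrightarrow> nat_le a c"
  unfolding nat_le_def by (metis add.assoc)

lemma nat_le_zero [simp]: "nat_le 0 (a::'s::comm_monoid_add)"
  unfolding nat_le_def by auto

lemma nat_le_add: "nat_le (a::'s::comm_monoid_add) b \<Longrightarrow> nat_le c d \<Longrightarrow> nat_le (a + c) (b + d)"
  unfolding nat_le_def by (metis add.assoc add.commute)

lemma nat_le_sum:
  "(\<And>x. x \<in> A \<Longrightarrow> nat_le (f x) (g x)) \<Longrightarrow> nat_le (sum f A) (sum (g::_ \<Rightarrow> 's::comm_monoid_add) A)"
  by (induction A rule: infinite_finite_induct) (simp_all add: nat_le_add)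

lemma fun_nat_le_refl: "fun_nat_le f f"
  by (simp add: fun_nat_le_def)

lemma fun_nat_le_trans: "fun_nat_le f g \<Longrightarrow> fun_nat_le g h \<Longrightarrow> fun_nat_le f h"
  unfolding fun_nat_le_def using nat_le_trans by blast

lemma nat_dec_chain_antimono: "nat_dec_chain a \<Longrightarrow> i \<le> j \<Longrightarrow> nat_le (a j) (a i)"
proof (induction j)
  case (Suc j)
  then show ?case
    unfolding nat_dec_chain_def by (metis le_Suc_eq nat_le_refl nat_le_trans)
qed simp

lemma nat_dec_chain_funI: "(\<And>i. fun_nat_le (F (Suc i)) (F i)) \<Longrightarrow> nat_dec_chain (\<lambda>i. F i x)"
  unfolding nat_dec_chain_def fun_nat_le_def by simp

lemma is_nat_glb_lower: "is_nat_glb (range F) s \<Longrightarrow> nat_le s (F i)"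
  unfolding is_nat_glb_def by auto

lemma is_nat_glb_singleton: "is_nat_glb {c} c"
  unfolding is_nat_glb_def by auto

lemma is_nat_glb_Suc:
  assumes "nat_dec_chain a" "is_nat_glb (range a) s"
  shows "is_nat_glb (range (\<lambda>i. a (Suc i))) s"
  unfolding is_nat_glb_def
proof safe
  fix u assume "\<forall>x\<in>range (\<lambda>i. a (Suc i)). nat_le u x"
  then have "nat_le u (a i)" for i
    using assms(1) unfolding nat_dec_chain_def by (meson nat_le_trans rangeI)
  then show "nat_le u s" using assms(2) unfolding is_nat_glb_def by auto
qed (use assms(2) in \<open>simp add: is_nat_glb_lower\<close>)

definition fun_nat_mono :: "(('a \<Rightarrow> 's::comm_monoid_add) \<Rightarrow> ('b \<Rightarrow> 's)) \<Rightarrow> bool" where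
  "fun_nat_mono \<Phi> \<longleftrightarrow> (\<forall>X Y. fun_nat_le X Y \<longrightarrow> fun_nat_le (\<Phi> X) (\<Phi> Y))"

definition fun_nat_inf_continuous :: "(('a \<Rightarrow> 's::comm_monoid_add) \<Rightarrow> ('b \<Rightarrow> 's)) \<Rightarrow> bool" where
  "fun_nat_inf_continuous \<Phi> \<longleftrightarrow> (\<forall>F X. (\<forall>i. fun_nat_le (F (Suc i)) (F i)) \<longrightarrow>
     (\<forall>x. is_nat_glb (range (\<lambda>i. F i x)) (X x)) \<longrightarrow>
     (\<forall>y. is_nat_glb (range (\<lambda>i. \<Phi> (F i) y)) (\<Phi> X y)))"

lemma fun_nat_monoD: "fun_nat_mono \<Phi> \<Longrightarrow> fun_nat_le X Y \<Longrightarrow> fun_nat_le (\<Phi> X) (\<Phi> Y)"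
  unfolding fun_nat_mono_def by blast

lemma fun_nat_inf_continuousD:
  "fun_nat_inf_continuous \<Phi> \<Longrightarrow> (\<And>i. fun_nat_le (F (Suc i)) (F i)) \<Longrightarrow>
   (\<And>x. is_nat_glb (range (\<lambda>i. F i x)) (X x)) \<Longrightarrow> is_nat_glb (range (\<lambda>i. \<Phi> (F i) y)) (\<Phi> X y)"
  unfolding fun_nat_inf_continuous_def by blast

lemma fun_nat_inf_continuousI:
  "(\<And>F X y. (\<And>i. fun_nat_le (F (Suc i)) (F i)) \<Longrightarrow> (\<And>x. is_nat_glb (range (\<lambda>i. F i x)) (X x)) \<Longrightarrow>
     is_nat_glb (range (\<lambda>i. \<Phi> (F i) y)) (\<Phi> X y)) \<Longrightarrow> fun_nat_inf_continuous \<Phi>"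
  unfolding fun_nat_inf_continuous_def by blast

lemma fun_nat_inf_continuous_comp:
  fixes \<Psi> :: "('a \<Rightarrow> 's::comm_monoid_add) \<Rightarrow> ('b \<Rightarrow> 's)" and \<Phi> :: "('b \<Rightarrow> 's) \<Rightarrow> ('c \<Rightarrow> 's)"
  assumes "fun_nat_mono \<Psi>" "fun_nat_inf_continuous \<Psi>" "fun_nat_inf_continuous \<Phi>"
  shows "fun_nat_inf_continuous (\<lambda>X. \<Phi> (\<Psi> X))"
proof (rule fun_nat_inf_continuousI)
  fix F :: "nat \<Rightarrow> 'a \<Rightarrow> 's" and X y
  assume "\<And>i. fun_nat_le (F (Suc i)) (F i)" "\<And>x. is_nat_glb (range (\<lambda>i. F i x)) (X x)"
  with assms have "\<And>i. fun_nat_le (\<Psi> (F (Suc i))) (\<Psi> (F i))"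
    and "\<And>x. is_nat_glb (range (\<lambda>i. \<Psi> (F i) x)) (\<Psi> X x)"
    by (auto simp: fun_nat_monoD fun_nat_inf_continuousD)
  then show "is_nat_glb (range (\<lambda>i. \<Phi> (\<Psi> (F i)) y)) (\<Phi> (\<Psi> X) y)"
    using fun_nat_inf_continuousD[OF assms(3)] by simp
qed

locale bicontinuous_module =
  fixes act :: "'m::monoid_mult \<Rightarrow> 's::comm_monoid_add \<Rightarrow> 's"
  assumes module: "monoid_module act" and bicontinuous: "omega_bicontinuous act"
begin

lemma act_one [simp]: "act 1 a = a"
  using module unfolding monoid_module_def by auto

lemma act_mult: "act (u * v) a = act u (act v a)"
  using module unfolding monoid_module_def by auto

lemma act_add: "act v (a + b) = act v a + act v b"
  using module unfolding monoid_module_def by auto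

lemma act_zero [simp]: "act v 0 = 0"
  using module unfolding monoid_module_def by auto

lemma act_sum: "act v (sum f A) = (\<Sum>x\<in>A. act v (f x))"
  by (induction A rule: infinite_finite_induct) (simp_all add: act_add)

lemma act_nat_le_mono: "nat_le a b \<Longrightarrow> nat_le (act v a) (act v b)"
  unfolding nat_le_def by (metis act_add)

lemma nat_le_antisym: "nat_le (a::'s) b \<Longrightarrow> nat_le b a \<Longrightarrow> a = b"
  using bicontinuous unfolding omega_bicontinuous_def by blast

lemma nat_le_top [simp]: "nat_le (a::'s) nat_top"
proof -
  obtain t :: 's where t: "\<forall>a. nat_le a t"
    using bicontinuous unfolding omega_bicontinuous_def by blast
  have "nat_top = t"
    unfolding nat_top_def by (rule the_equality) (use t nat_le_antisym in auto)
  with t show ?thesis by simp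
qed

lemma nat_dec_chain_glb_exists: "nat_dec_chain (ch::nat \<Rightarrow> 's) \<Longrightarrow> \<exists>s. is_nat_glb (range ch) s"
  using bicontinuous unfolding omega_bicontinuous_def by blast

lemma is_nat_glb_add_const:
  "nat_dec_chain (ch::nat \<Rightarrow> 's) \<Longrightarrow> is_nat_glb (range ch) s \<Longrightarrow>
   is_nat_glb (range (\<lambda>i. ch i + b)) (s + b)"
  using bicontinuous unfolding omega_bicontinuous_def by blast

lemma is_nat_glb_act:
  "nat_dec_chain (ch::nat \<Rightarrow> 's) \<Longrightarrow> is_nat_glb (range ch) s \<Longrightarrow>
   is_nat_glb (range (\<lambda>i. act v (ch i))) (act v s)"
  using bicontinuous unfolding omega_bicontinuous_def by blast

lemma is_nat_glb_unique: "is_nat_glb A (s::'s) \<Longrightarrow> is_nat_glb A t \<Longrightarrow> s = t"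
  unfolding is_nat_glb_def by (meson nat_le_antisym)

lemma nat_Inf_eqI: "is_nat_glb A (s::'s) \<Longrightarrow> nat_Inf A = s"
  unfolding nat_Inf_def by (rule the_equality) (auto intro: is_nat_glb_unique)

lemma is_nat_glb_nat_Inf: "nat_dec_chain (ch::nat \<Rightarrow> 's) \<Longrightarrow> is_nat_glb (range ch) (nat_Inf (range ch))"
  using nat_dec_chain_glb_exists nat_Inf_eqI by metis

text \<open>Continuity of \<open>+\<close> is only assumed in each argument separately; joint continuity
  follows because the two chains are decreasing, so the diagonal is coinitial in the square.\<close>
lemma is_nat_glb_add:
  assumes da: "nat_dec_chain a" and db: "nat_dec_chain b"
    and ga: "is_nat_glb (range a) (s::'s)" and gb: "is_nat_glb (range b) t"
  shows "is_nat_glb (range (\<lambda>i. a i + b i)) (s + t)"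
  unfolding is_nat_glb_def
proof safe
  fix i show "nat_le (s + t) (a i + b i)"
    using ga gb by (simp add: is_nat_glb_lower nat_le_add)
next
  fix u assume u: "\<forall>x\<in>range (\<lambda>i. a i + b i). nat_le u x"
  have "nat_le u (a i + b j)" for i j
  proof -
    have "nat_le (a (max i j) + b (max i j)) (a i + b j)"
      by (intro nat_le_add nat_dec_chain_antimono[OF da] nat_dec_chain_antimono[OF db]) simp_all
    with u show ?thesis by (blast intro: nat_le_trans)
  qed
  then have "nat_le u (s + b j)" for j
    using is_nat_glb_add_const[OF da ga, of "b j"] unfolding is_nat_glb_def by auto
  then have "nat_le u (t + s)"
    using is_nat_glb_add_const[OF db gb, of s] unfolding is_nat_glb_def by (auto simp: add.commute)
  then show "nat_le u (s + t)" by (simp add: add.commute)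
qed

lemma is_nat_glb_sum:
  assumes "finite A" "\<And>x. x \<in> A \<Longrightarrow> nat_dec_chain (g x)"
    "\<And>x. x \<in> A \<Longrightarrow> is_nat_glb (range (g x)) (s x :: 's)"
  shows "is_nat_glb (range (\<lambda>i. \<Sum>x\<in>A. g x i)) (\<Sum>x\<in>A. s x)"
  using assms
proof (induction A rule: finite_induct)
  case empty
  then show ?case using is_nat_glb_singleton by simp
next
  case (insert x A)
  have "nat_dec_chain (\<lambda>i. \<Sum>x\<in>A. g x i)"
    using insert.prems(1) unfolding nat_dec_chain_def by (simp add: nat_le_sum)
  with insert show ?case by (simp add: is_nat_glb_add)
qed

lemma fun_nat_inf_continuous_add:
  fixes \<Phi> \<Psi> :: "('a \<Rightarrow> 's) \<Rightarrow> ('b \<Rightarrow> 's)"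
  assumes "fun_nat_mono \<Phi>" "fun_nat_inf_continuous \<Phi>" "fun_nat_mono \<Psi>" "fun_nat_inf_continuous \<Psi>"
  shows "fun_nat_inf_continuous (\<lambda>X y. \<Phi> X y + \<Psi> X y)"
proof (rule fun_nat_inf_continuousI)
  fix F :: "nat \<Rightarrow> 'a \<Rightarrow> 's" and X y
  assume F_dec: "\<And>i. fun_nat_le (F (Suc i)) (F i)"
    and F_glb: "\<And>x. is_nat_glb (range (\<lambda>i. F i x)) (X x)"
  have "nat_dec_chain (\<lambda>i. \<Theta> (F i) y)" if "fun_nat_mono \<Theta>" for \<Theta> :: "('a \<Rightarrow> 's) \<Rightarrow> ('b \<Rightarrow> 's)"
    by (rule nat_dec_chain_funI[of "\<lambda>i. \<Theta> (F i)"]) (rule fun_nat_monoD[OF that F_dec])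
  moreover have "is_nat_glb (range (\<lambda>i. \<Theta> (F i) y)) (\<Theta> X y)"
    if "fun_nat_inf_continuous \<Theta>" for \<Theta> :: "('a \<Rightarrow> 's) \<Rightarrow> ('b \<Rightarrow> 's)"
    by (rule fun_nat_inf_continuousD[OF that F_dec F_glb])
  ultimately show "is_nat_glb (range (\<lambda>i. \<Phi> (F i) y + \<Psi> (F i) y)) (\<Phi> X y + \<Psi> X y)"
    using assms by (simp add: is_nat_glb_add)
qed

section \<open>Greatest fixed points\<close>

text \<open>Kleene iteration from \<open>nat_top\<close>: the iterates decrease because \<open>\<Phi>\<close> is monotone,
  and their pointwise infimum is a fixed point because \<open>\<Phi>\<close> is continuous.\<close>
lemma greatest_postfixpoint_exists:
  fixes \<Phi> :: "('a \<Rightarrow> 's) \<Rightarrow> ('a \<Rightarrow> 's)"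
  assumes mono: "fun_nat_mono \<Phi>" and cont: "fun_nat_inf_continuous \<Phi>"
  shows "\<exists>Y. \<Phi> Y = Y \<and> (\<forall>X. fun_nat_le X (\<Phi> X) \<longrightarrow> fun_nat_le X Y)"
proof -
  define T where "T n = (\<Phi> ^^ n) (\<lambda>_. nat_top)" for n
  have T_dec: "fun_nat_le (T (Suc n)) (T n)" for n
  proof (induction n)
    case 0
    then show ?case by (simp add: T_def fun_nat_le_def)
  next
    case (Suc n)
    then show ?case using fun_nat_monoD[OF mono] by (simp add: T_def)
  qed
  define Y where "Y x = nat_Inf (range (\<lambda>n. T n x))" for x
  have Y_glb: "is_nat_glb (range (\<lambda>n. T n x)) (Y x)" for x
    unfolding Y_def by (rule is_nat_glb_nat_Inf[OF nat_dec_chain_funI[of T, OF T_dec]])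
  have "is_nat_glb (range (\<lambda>n. T (Suc n) x)) (\<Phi> Y x)" for x
    using fun_nat_inf_continuousD[OF cont T_dec Y_glb] by (simp add: T_def)
  moreover have "is_nat_glb (range (\<lambda>n. T (Suc n) x)) (Y x)" for x
    by (rule is_nat_glb_Suc[OF nat_dec_chain_funI[of T, OF T_dec] Y_glb])
  ultimately have "\<Phi> Y = Y" using is_nat_glb_unique by blast
  moreover have "fun_nat_le X Y" if post: "fun_nat_le X (\<Phi> X)" for X
  proof -
    have "fun_nat_le X (T n)" for n
    proof (induction n)
      case 0
      then show ?case by (simp add: T_def fun_nat_le_def)
    next
      case (Suc n)
      then have "fun_nat_le (\<Phi> X) (T (Suc n))" using fun_nat_monoD[OF mono] by (simp add: T_def)
      with post show ?case by (rule fun_nat_le_trans)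
    qed
    then show ?thesis using Y_glb unfolding fun_nat_le_def is_nat_glb_def by auto
  qed
  ultimately show ?thesis by blast
qed

lemma nat_gfp_eqI:
  assumes "\<Phi> Y = (Y :: 'a \<Rightarrow> 's)" "\<And>X. fun_nat_le X (\<Phi> X) \<Longrightarrow> fun_nat_le X Y"
  shows "nat_gfp \<Phi> = Y"
  unfolding nat_gfp_def
proof (rule the_equality)
  fix Z assume Z: "\<Phi> Z = Z \<and> (\<forall>Y. \<Phi> Y = Y \<longrightarrow> fun_nat_le Y Z)"
  then have "fun_nat_le Y Z" "fun_nat_le Z Y" using assms by auto
  then show "Z = Y" unfolding fun_nat_le_def using nat_le_antisym by blast
qed (use assms fun_nat_le_refl in metis)

lemma nat_gfp_unfold:
  "fun_nat_mono \<Phi> \<Longrightarrow> fun_nat_inf_continuous \<Phi> \<Longrightarrow> \<Phi> (nat_gfp \<Phi>) = (nat_gfp \<Phi> :: 'a \<Rightarrow> 's)"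
  using greatest_postfixpoint_exists nat_gfp_eqI by metis

lemma nat_gfp_coinduct:
  "fun_nat_mono \<Phi> \<Longrightarrow> fun_nat_inf_continuous \<Phi> \<Longrightarrow> fun_nat_le X (\<Phi> X) \<Longrightarrow>
   fun_nat_le X (nat_gfp \<Phi> :: 'a \<Rightarrow> 's)"
  using greatest_postfixpoint_exists nat_gfp_eqI by metis

end

section \<open>Continuity of the weakest liberal preweighting\<close>

definition loop_charfun ::
  "('m::monoid_mult \<Rightarrow> 's::comm_monoid_add \<Rightarrow> 's) \<Rightarrow> (('x \<Rightarrow> 'v) \<Rightarrow> bool) \<Rightarrow> ('x, 'v, 'm) wgcl \<Rightarrow>
   (('x \<Rightarrow> 'v) \<Rightarrow> 's) \<Rightarrow> (('x \<Rightarrow> 'v) \<Rightarrow> 's) \<Rightarrow> ('x \<Rightarrow> 'v) \<Rightarrow> 's" where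
  "loop_charfun act \<phi> C f = (\<lambda>X \<sigma>. if \<phi> \<sigma> then wlp act C X \<sigma> else f \<sigma>)"

lemma wlp_While_nat_gfp: "wlp act (While \<phi> C) f = nat_gfp (loop_charfun act \<phi> C f)"
  by (simp add: loop_charfun_def)

context bicontinuous_module
begin

lemma loop_charfun_mono:
  "fun_nat_mono (wlp act C) \<Longrightarrow> fun_nat_mono (loop_charfun act \<phi> C f)"
  unfolding fun_nat_mono_def loop_charfun_def fun_nat_le_def by auto

lemma loop_charfun_inf_continuous:
  fixes C :: "('x, 'v, 'm) wgcl"
  assumes "fun_nat_inf_continuous (wlp act C)"
  shows "fun_nat_inf_continuous (loop_charfun act \<phi> C f)"
proof (rule fun_nat_inf_continuousI)
  fix F :: "nat \<Rightarrow> ('x \<Rightarrow> 'v) \<Rightarrow> 's" and X y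
  assume "\<And>i. fun_nat_le (F (Suc i)) (F i)" "\<And>x. is_nat_glb (range (\<lambda>i. F i x)) (X x)"
  then show "is_nat_glb (range (\<lambda>i. loop_charfun act \<phi> C f (F i) y)) (loop_charfun act \<phi> C f X y)"
    using fun_nat_inf_continuousD[OF assms] by (simp add: loop_charfun_def is_nat_glb_singleton)
qed

lemma wlp_While_unfold:
  assumes "fun_nat_mono (wlp act C)" "fun_nat_inf_continuous (wlp act C)"
  shows "wlp act (While \<phi> C) f \<sigma> = (if \<phi> \<sigma> then wlp act C (wlp act (While \<phi> C) f) \<sigma> else f \<sigma>)"
  using nat_gfp_unfold[OF loop_charfun_mono[OF assms(1)] loop_charfun_inf_continuous[OF assms(2)]]
  by (metis loop_charfun_def wlp_While_nat_gfp)

lemma wlp_While_coinduct: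
  assumes "fun_nat_mono (wlp act C)" "fun_nat_inf_continuous (wlp act C)"
    and "fun_nat_le X (loop_charfun act \<phi> C f X)"
  shows "fun_nat_le X (wlp act (While \<phi> C) f)"
  unfolding wlp_While_nat_gfp
  by (rule nat_gfp_coinduct[OF loop_charfun_mono[OF assms(1)] loop_charfun_inf_continuous[OF assms(2)] assms(3)])

lemma wlp_While_mono:
  fixes C :: "('x, 'v, 'm) wgcl"
  assumes mono: "fun_nat_mono (wlp act C)" and cont: "fun_nat_inf_continuous (wlp act C)"
  shows "fun_nat_mono (wlp act (While \<phi> C))"
  unfolding fun_nat_mono_def
proof (intro allI impI)
  fix f g :: "('x \<Rightarrow> 'v) \<Rightarrow> 's"
  assume "fun_nat_le f g"
  then have "fun_nat_le (loop_charfun act \<phi> C f X) (loop_charfun act \<phi> C g X)" for X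
    by (simp add: loop_charfun_def fun_nat_le_def)
  moreover have "loop_charfun act \<phi> C f (wlp act (While \<phi> C) f) = wlp act (While \<phi> C) f"
    using wlp_While_unfold[OF mono cont] by (auto simp: loop_charfun_def)
  ultimately show "fun_nat_le (wlp act (While \<phi> C) f) (wlp act (While \<phi> C) g)"
    by (metis wlp_While_coinduct[OF mono cont])
qed

text \<open>The pointwise infimum of the \<open>wlp act (While \<phi> C) (F i)\<close> is a fixed point of the
  characteristic function for the infimum \<open>X\<close> of the \<open>F i\<close>, hence below
  \<open>wlp act (While \<phi> C) X\<close> by coinduction.\<close>
lemma wlp_While_inf_continuous:
  fixes C :: "('x, 'v, 'm) wgcl"
  assumes mono: "fun_nat_mono (wlp act C)" and cont: "fun_nat_inf_continuous (wlp act C)"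
  shows "fun_nat_inf_continuous (wlp act (While \<phi> C))"
proof (rule fun_nat_inf_continuousI)
  fix F :: "nat \<Rightarrow> ('x \<Rightarrow> 'v) \<Rightarrow> 's" and X y
  assume F_dec: "\<And>i. fun_nat_le (F (Suc i)) (F i)"
    and F_glb: "\<And>x. is_nat_glb (range (\<lambda>i. F i x)) (X x)"
  define W where "W i = wlp act (While \<phi> C) (F i)" for i
  have W_dec: "fun_nat_le (W (Suc i)) (W i)" for i
    unfolding W_def by (rule fun_nat_monoD[OF wlp_While_mono[OF mono cont] F_dec])
  have W_unfold: "W i x = (if \<phi> x then wlp act C (W i) x else F i x)" for i x
    unfolding W_def by (rule wlp_While_unfold[OF mono cont])
  define Z where "Z x = nat_Inf (range (\<lambda>i. W i x))" for x
  have Z_glb: "is_nat_glb (range (\<lambda>i. W i x)) (Z x)" for x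
    unfolding Z_def by (rule is_nat_glb_nat_Inf[OF nat_dec_chain_funI[of W, OF W_dec]])
  have "loop_charfun act \<phi> C X Z = Z"
  proof
    fix x
    show "loop_charfun act \<phi> C X Z x = Z x"
    proof (cases "\<phi> x")
      case True
      then have "is_nat_glb (range (\<lambda>i. wlp act C (W i) x)) (Z x)"
        using Z_glb[of x] W_unfold[of _ x] by simp
      moreover have "is_nat_glb (range (\<lambda>i. wlp act C (W i) x)) (wlp act C Z x)"
        by (rule fun_nat_inf_continuousD[OF cont W_dec Z_glb])
      ultimately show ?thesis
        using True by (simp add: loop_charfun_def is_nat_glb_unique)
    next
      case False
      then have "is_nat_glb (range (\<lambda>i. F i x)) (Z x)"
        using Z_glb[of x] W_unfold[of _ x] by simp
      with False F_glb show ?thesis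
        by (metis loop_charfun_def is_nat_glb_unique)
    qed
  qed
  then have Z_le: "fun_nat_le Z (wlp act (While \<phi> C) X)"
    by (metis wlp_While_coinduct[OF mono cont] fun_nat_le_refl)
  have "fun_nat_le X (F i)" for i
    unfolding fun_nat_le_def using is_nat_glb_lower[OF F_glb] by blast
  then have "nat_le (wlp act (While \<phi> C) X y) (W i y)" for i
    unfolding W_def using fun_nat_monoD[OF wlp_While_mono[OF mono cont]] fun_nat_le_def by blast
  moreover have "nat_le u (wlp act (While \<phi> C) X y)" if "\<And>i. nat_le u (W i y)" for u
    using that Z_glb[of y] Z_le unfolding is_nat_glb_def fun_nat_le_def by (blast intro: nat_le_trans)
  ultimately show "is_nat_glb (range (\<lambda>i. wlp act (While \<phi> C) (F i) y)) (wlp act (While \<phi> C) X y)"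
    unfolding is_nat_glb_def W_def by auto
qed

lemma wlp_mono_inf_continuous:
  fixes C :: "('x, 'v, 'm) wgcl"
  shows "fun_nat_mono (wlp act C) \<and> fun_nat_inf_continuous (wlp act C)"
proof (induction C)
  case (Assign x e)
  then show ?case unfolding fun_nat_mono_def fun_nat_inf_continuous_def fun_nat_le_def by simp
next
  case (Seq C1 C2)
  then show ?case
    using fun_nat_inf_continuous_comp[of "wlp act C2" "wlp act C1"] by (auto simp: fun_nat_mono_def)
next
  case (Ite \<phi> C1 C2)
  then show ?case unfolding fun_nat_mono_def fun_nat_inf_continuous_def fun_nat_le_def by simp
next
  case (Branch C1 C2)
  have "wlp act (Branch C1 C2) = (\<lambda>X y. wlp act C1 X y + wlp act C2 X y)"
    by (simp add: fun_eq_iff)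
  with Branch have "fun_nat_inf_continuous (wlp act (Branch C1 C2))"
    using fun_nat_inf_continuous_add[of "wlp act C1" "wlp act C2"] by simp
  moreover have "fun_nat_mono (wlp act (Branch C1 C2))"
    using Branch unfolding fun_nat_mono_def fun_nat_le_def by (simp add: nat_le_add)
  ultimately show ?case by blast
next
  case (Weight a)
  have "fun_nat_inf_continuous (wlp act (Weight a))"
    by (rule fun_nat_inf_continuousI) (simp add: is_nat_glb_act nat_dec_chain_funI)
  moreover have "fun_nat_mono (wlp act (Weight a))"
    unfolding fun_nat_mono_def fun_nat_le_def by (simp add: act_nat_le_mono)
  ultimately show ?case by blast
next
  case (While \<phi> C)
  then show ?case using wlp_While_mono wlp_While_inf_continuous by blast
qed

lemmas wlp_mono = wlp_mono_inf_continuous[THEN conjunct1]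
lemmas wlp_inf_continuous = wlp_mono_inf_continuous[THEN conjunct2]

end

section \<open>Transitions and paths\<close>

definition succs :: "('x, 'v, 'm::monoid_mult) config \<Rightarrow> ('m \<times> ('x, 'v, 'm) config) set" where
  "succs c = {(a, c'). step c a c'}"

inductive_cases step_NoneE: "step (None, \<sigma>, \<beta>) a c'"
inductive_cases step_AssignE: "step (Some (Assign x e), \<sigma>, \<beta>) a c'"
inductive_cases step_SeqE: "step (Some (Seq C1 C2), \<sigma>, \<beta>) a c'"
inductive_cases step_IteE: "step (Some (Ite \<phi> C1 C2), \<sigma>, \<beta>) a c'"
inductive_cases step_BranchE: "step (Some (Branch C1 C2), \<sigma>, \<beta>) a c'"
inductive_cases step_WeightE: "step (Some (Weight w), \<sigma>, \<beta>) a c'"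
inductive_cases step_WhileE: "step (Some (While \<phi> C), \<sigma>, \<beta>) a c'"

lemma succs_None [simp]: "succs (None, \<sigma>, \<beta>) = {}"
  unfolding succs_def by (auto elim: step_NoneE)

lemma succs_Assign [simp]: "succs (Some (Assign x e), \<sigma>, \<beta>) = {(1, None, \<sigma>(x := e \<sigma>), \<beta>)}"
  unfolding succs_def by (auto elim: step_AssignE intro: step.intros)

lemma succs_Weight [simp]: "succs (Some (Weight w), \<sigma>, \<beta>) = {(w, None, \<sigma>, \<beta>)}"
  unfolding succs_def by (auto elim: step_WeightE intro: step.intros)

lemma succs_Ite [simp]:
  "succs (Some (Ite \<phi> C1 C2), \<sigma>, \<beta>) = {(1, Some (if \<phi> \<sigma> then C1 else C2), \<sigma>, \<beta>)}"
  unfolding succs_def by (auto elim: step_IteE intro: step.intros)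

lemma succs_Branch [simp]:
  "succs (Some (Branch C1 C2), \<sigma>, \<beta>) = {(1, Some C1, \<sigma>, \<beta> @ [True]), (1, Some C2, \<sigma>, \<beta> @ [False])}"
  unfolding succs_def by (auto elim: step_BranchE intro: step.intros)

lemma succs_While [simp]:
  "succs (Some (While \<phi> C), \<sigma>, \<beta>) =
   {(1, if \<phi> \<sigma> then (Some (Seq C (While \<phi> C)), \<sigma>, \<beta>) else (None, \<sigma>, \<beta>))}"
  unfolding succs_def by (auto elim: step_WhileE intro: step.intros)

fun seq_lift :: "('x, 'v, 'm) wgcl \<Rightarrow> ('x, 'v, 'm) config \<Rightarrow> ('x, 'v, 'm) config" where
  "seq_lift C2 (None, \<sigma>, \<beta>) = (Some C2, \<sigma>, \<beta>)"
| "seq_lift C2 (Some C, \<sigma>, \<beta>) = (Some (Seq C C2), \<sigma>, \<beta>)"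

lemma succs_Seq:
  "succs (Some (Seq C1 C2), \<sigma>, \<beta>) = (\<lambda>(a, c). (a, seq_lift C2 c)) ` succs (Some C1, \<sigma>, \<beta>)"
proof (intro set_eqI iffI)
  fix t assume "t \<in> succs (Some (Seq C1 C2), \<sigma>, \<beta>)"
  then show "t \<in> (\<lambda>(a, c). (a, seq_lift C2 c)) ` succs (Some C1, \<sigma>, \<beta>)"
    unfolding succs_def
  proof (auto elim!: step_SeqE)
    fix a C1' \<sigma>' \<beta>' assume "step (Some C1, \<sigma>, \<beta>) a (Some C1', \<sigma>', \<beta>')"
    then show "(a, Some (Seq C1' C2), \<sigma>', \<beta>') \<in> (\<lambda>(a, c). (a, seq_lift C2 c)) ` {(a, c). step (Some C1, \<sigma>, \<beta>) a c}"
      by (intro image_eqI[where x="(a, Some C1', \<sigma>', \<beta>')"]) auto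
  next
    fix a \<sigma>' \<beta>' assume "step (Some C1, \<sigma>, \<beta>) a (None, \<sigma>', \<beta>')"
    then show "(a, Some C2, \<sigma>', \<beta>') \<in> (\<lambda>(a, c). (a, seq_lift C2 c)) ` {(a, c). step (Some C1, \<sigma>, \<beta>) a c}"
      by (intro image_eqI[where x="(a, None, \<sigma>', \<beta>')"]) auto
  qed
next
  fix t assume "t \<in> (\<lambda>(a, c). (a, seq_lift C2 c)) ` succs (Some C1, \<sigma>, \<beta>)"
  then obtain a oc \<sigma>' \<beta>' where "t = (a, seq_lift C2 (oc, \<sigma>', \<beta>'))" "step (Some C1, \<sigma>, \<beta>) a (oc, \<sigma>', \<beta>')"
    unfolding succs_def by auto
  then show "t \<in> succs (Some (Seq C1 C2), \<sigma>, \<beta>)"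
    unfolding succs_def by (cases oc) (auto intro: step.intros)
qed

lemma Seq_neq_right: "Seq C1 C2 \<noteq> C2"
  by (induction C2 arbitrary: C1) auto

lemma inj_seq_lift: "inj (seq_lift C2)"
proof (rule injI)
  fix c d :: "('a, 'b, 'c) config"
  assume "seq_lift C2 c = seq_lift C2 d"
  then show "c = d"
    by (cases c; cases d; cases "fst c"; cases "fst d") (auto dest: sym simp: Seq_neq_right)
qed

lemma finite_succs: "finite (succs c)"
proof -
  have "finite (succs (Some C, \<sigma>, \<beta>))" for C :: "('x, 'v, 'm::monoid_mult) wgcl" and \<sigma> \<beta>
    by (induction C arbitrary: \<sigma> \<beta>) (simp_all add: succs_Seq)
  then show ?thesis by (cases c; cases "fst c") auto
qed

text \<open>A transition only appends to the branching history and does not inspect it.\<close>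
lemma step_history_suffix:
  "step x a y \<Longrightarrow> \<exists>d. snd (snd y) = snd (snd x) @ d \<and>
     (\<forall>\<beta>. step (fst x, fst (snd x), \<beta>) a (fst y, fst (snd y), \<beta> @ d))"
  by (induction rule: step.induct) (auto simp del: fun_upd_apply intro: step.intros)

lemma succs_history:
  "succs (c, \<sigma>, \<beta>) = (\<lambda>(a, c', \<sigma>', \<gamma>). (a, c', \<sigma>', \<beta> @ \<gamma>)) ` succs (c, \<sigma>, [])"
proof (intro set_eqI iffI)
  fix t assume "t \<in> succs (c, \<sigma>, \<beta>)"
  then obtain a c' \<sigma>' \<gamma> where t: "t = (a, c', \<sigma>', \<gamma>)" and "step (c, \<sigma>, \<beta>) a (c', \<sigma>', \<gamma>)"
    unfolding succs_def by auto
  then obtain d where "\<gamma> = \<beta> @ d" "step (c, \<sigma>, []) a (c', \<sigma>', d)"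
    using step_history_suffix by fastforce
  then show "t \<in> (\<lambda>(a, c', \<sigma>', \<gamma>). (a, c', \<sigma>', \<beta> @ \<gamma>)) ` succs (c, \<sigma>, [])"
    unfolding succs_def t by (intro image_eqI[where x="(a, c', \<sigma>', d)"]) auto
next
  fix t assume "t \<in> (\<lambda>(a, c', \<sigma>', \<gamma>). (a, c', \<sigma>', \<beta> @ \<gamma>)) ` succs (c, \<sigma>, [])"
  then obtain a c' \<sigma>' d where "t = (a, c', \<sigma>', \<beta> @ d)" "step (c, \<sigma>, []) a (c', \<sigma>', d)"
    unfolding succs_def by auto
  then show "t \<in> succs (c, \<sigma>, \<beta>)"
    using step_history_suffix[of "(c, \<sigma>, [])" a "(c', \<sigma>', d)"] unfolding succs_def by auto
qed

lemma paths_0: "paths 0 c = {[]}"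
  unfolding paths_def by auto

lemma paths_Suc: "paths (Suc n) c = (\<lambda>(t, \<pi>). t # \<pi>) ` (SIGMA t:succs c. paths n (snd t))"
proof (intro set_eqI iffI)
  fix \<pi> assume "\<pi> \<in> paths (Suc n) c"
  then obtain a c' \<pi>' where "\<pi> = (a, c') # \<pi>'" "length \<pi>' = n" "step c a c'" "is_path c' \<pi>'"
    unfolding paths_def by (cases \<pi>) auto
  then show "\<pi> \<in> (\<lambda>(t, \<pi>). t # \<pi>) ` (SIGMA t:succs c. paths n (snd t))"
    unfolding succs_def paths_def by (intro image_eqI[where x="((a, c'), \<pi>')"]) auto
qed (auto simp: succs_def paths_def)

lemma finite_paths: "finite (paths n c)"
proof (induction n arbitrary: c)
  case 0
  then show ?case by (simp add: paths_0)
next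
  case (Suc n)
  then show ?case by (simp add: paths_Suc finite_succs)
qed

definition history_indep :: "(('x, 'v, 'm) config \<Rightarrow> 's) \<Rightarrow> bool" where
  "history_indep H \<longleftrightarrow> (\<forall>c \<sigma> \<beta> \<beta>'. H (c, \<sigma>, \<beta>) = H (c, \<sigma>, \<beta>'))"

lemma history_indepD: "history_indep H \<Longrightarrow> H (c, \<sigma>, \<beta>) = H (c, \<sigma>, \<beta>')"
  unfolding history_indep_def by blast

lemma history_indep_seq_lift:
  assumes "history_indep H"
  shows "history_indep (H \<circ> seq_lift C2)"
  unfolding history_indep_def
proof (intro allI)
  fix c \<sigma> \<beta> \<beta>'
  show "(H \<circ> seq_lift C2) (c, \<sigma>, \<beta>) = (H \<circ> seq_lift C2) (c, \<sigma>, \<beta>')"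
    by (cases c) (auto intro: history_indepD[OF assms])
qed

fun config_wlp :: "('m::monoid_mult \<Rightarrow> 's::comm_monoid_add \<Rightarrow> 's) \<Rightarrow> (('x \<Rightarrow> 'v) \<Rightarrow> 's) \<Rightarrow>
    ('x, 'v, 'm) config \<Rightarrow> 's" where
  "config_wlp act f (None, \<sigma>, \<beta>) = f \<sigma>"
| "config_wlp act f (Some C, \<sigma>, \<beta>) = wlp act C f \<sigma>"

lemma config_wlp_seq_lift: "config_wlp act f (seq_lift C2 c) = config_wlp act (wlp act C2 f) c"
  by (cases c; cases "fst c") auto

section \<open>Path sums and the weakest liberal preweighting\<close>

context bicontinuous_module
begin

definition step_sum :: "(('x, 'v, 'm) config \<Rightarrow> 's) \<Rightarrow> ('x, 'v, 'm) config \<Rightarrow> 's" where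
  "step_sum H c = (\<Sum>t\<in>succs c. act (fst t) (H (snd t)))"

definition path_sum :: "nat \<Rightarrow> ('x, 'v, 'm) config \<Rightarrow> 's" where
  "path_sum n c = (\<Sum>\<pi>\<in>paths n c. act (wgt \<pi>) nat_top)"

lemma step_sum_mono: "(\<And>c. nat_le (H c) (H' c)) \<Longrightarrow> nat_le (step_sum H c) (step_sum H' c)"
  unfolding step_sum_def by (simp add: nat_le_sum act_nat_le_mono)

lemma step_sum_Seq:
  "step_sum H (Some (Seq C1 C2), \<sigma>, \<beta>) = step_sum (H \<circ> seq_lift C2) (Some C1, \<sigma>, \<beta>)"
proof -
  have inj: "inj_on (\<lambda>(a, c). (a, seq_lift C2 c)) A" for A
    using inj_seq_lift[of C2] by (auto simp: inj_on_def inj_def)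
  show ?thesis
    unfolding step_sum_def succs_Seq by (subst sum.reindex[OF inj]) (simp add: case_prod_beta)
qed

lemma step_sum_history_indep: "history_indep H \<Longrightarrow> history_indep (step_sum H)"
proof -
  assume H: "history_indep H"
  have "step_sum H (c, \<sigma>, \<beta>) = step_sum H (c, \<sigma>, [])" for c \<sigma> \<beta>
  proof -
    have inj: "inj_on (\<lambda>(a, c', \<sigma>', \<gamma>). (a, c', \<sigma>', \<beta> @ \<gamma>)) A" for A
      by (auto simp: inj_on_def)
    have "((\<lambda>t. act (fst t) (H (snd t))) \<circ> (\<lambda>(a, c', \<sigma>', \<gamma>). (a, c', \<sigma>', \<beta> @ \<gamma>))) t =
          act (fst t) (H (snd t))" for t
      by (cases t rule: prod_cases4) (simp, metis history_indepD[OF H])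
    then show ?thesis
      unfolding step_sum_def
      by (subst succs_history, subst sum.reindex[OF inj], rule sum.cong[OF refl])
  qed
  then show ?thesis unfolding history_indep_def by metis
qed

lemma path_sum_0: "path_sum 0 c = nat_top"
  by (simp add: path_sum_def paths_0 wgt_def)

lemma path_sum_Suc: "path_sum (Suc n) c = step_sum (path_sum n) c"
proof -
  have inj: "inj_on (\<lambda>(t, \<pi>). t # \<pi>) A" for A :: "(('m \<times> ('x, 'v, 'm) config) \<times> _) set"
    by (auto simp: inj_on_def)
  have "path_sum (Suc n) c = (\<Sum>(t, \<pi>)\<in>(SIGMA t:succs c. paths n (snd t)). act (wgt (t # \<pi>)) nat_top)"
    unfolding path_sum_def paths_Suc by (subst sum.reindex[OF inj]) (simp add: case_prod_beta)
  also have "\<dots> = (\<Sum>t\<in>succs c. \<Sum>\<pi>\<in>paths n (snd t). act (wgt (t # \<pi>)) nat_top)"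
    by (subst sum.Sigma) (auto simp: finite_succs finite_paths)
  also have "\<dots> = step_sum (path_sum n) c"
    by (simp add: step_sum_def path_sum_def act_sum wgt_def act_mult)
  finally show ?thesis .
qed

lemma path_sum_Suc_le: "nat_le (path_sum (Suc n) c) (path_sum n c)"
proof (induction n arbitrary: c)
  case 0
  then show ?case by (simp add: path_sum_0)
next
  case (Suc n)
  show ?case
    unfolding path_sum_Suc[of "Suc n" c] path_sum_Suc[of n c] by (rule step_sum_mono) (rule Suc.IH)
qed

lemma path_sum_history_indep: "history_indep (path_sum n :: ('x, 'v, 'm) config \<Rightarrow> 's)"
proof (induction n)
  case 0
  then show ?case by (simp add: history_indep_def path_sum_0)
next
  case (Suc n)
  have "path_sum (Suc n) = step_sum (path_sum n :: ('x, 'v, 'm) config \<Rightarrow> 's)"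
    using path_sum_Suc by blast
  then show ?case using step_sum_history_indep[OF Suc.IH] by simp
qed

lemma wlp_eq_step_sum: "wlp act C f \<sigma> = step_sum (config_wlp act f) (Some C, \<sigma>, \<beta>)"
proof (induction C arbitrary: f \<sigma> \<beta>)
  case (Seq C1 C2)
  then show ?case by (simp add: step_sum_Seq comp_def config_wlp_seq_lift)
next
  case (While \<phi> C)
  show ?case
    by (subst wlp_While_unfold[OF wlp_mono wlp_inf_continuous]) (simp add: step_sum_def)
qed (simp_all add: step_sum_def)

lemma config_wlp_le_path_sum: "nat_le (config_wlp act (\<lambda>_. 0) c) (path_sum n c)"
proof (induction n arbitrary: c)
  case 0
  then show ?case by (simp add: path_sum_0)
next
  case (Suc n)
  obtain oc \<sigma> \<beta> where c: "c = (oc, \<sigma>, \<beta>)" by (cases c rule: prod_cases3)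
  show ?case
  proof (cases oc)
    case None
    with c show ?thesis by simp
  next
    case (Some C)
    with c have "config_wlp act (\<lambda>_. 0) c = step_sum (config_wlp act (\<lambda>_. 0)) c"
      by (simp add: wlp_eq_step_sum)
    also have "nat_le \<dots> (step_sum (path_sum n) c)"
      by (rule step_sum_mono) (rule Suc.IH)
    finally show ?thesis by (simp add: path_sum_Suc)
  qed
qed

definition step_postfixpoint :: "(('x, 'v, 'm) config \<Rightarrow> 's) \<Rightarrow> bool" where
  "step_postfixpoint H \<longleftrightarrow> (\<forall>C \<sigma> \<beta>. nat_le (H (Some C, \<sigma>, \<beta>)) (step_sum H (Some C, \<sigma>, \<beta>)))"

lemma step_postfixpointD: "step_postfixpoint H \<Longrightarrow> nat_le (H (Some C, \<sigma>, \<beta>)) (step_sum H (Some C, \<sigma>, \<beta>))"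
  unfolding step_postfixpoint_def by blast

lemma step_postfixpoint_seq_lift: "step_postfixpoint H \<Longrightarrow> step_postfixpoint (H \<circ> seq_lift C2)"
  unfolding step_postfixpoint_def by (metis seq_lift.simps(2) comp_apply step_sum_Seq)

lemma step_postfixpoint_le_wlp_While:
  assumes body: "\<And>H f \<sigma> \<beta>. step_postfixpoint H \<Longrightarrow> history_indep H \<Longrightarrow>
      (\<And>\<sigma> \<beta>. nat_le (H (None, \<sigma>, \<beta>)) (f \<sigma>)) \<Longrightarrow> nat_le (H (Some C, \<sigma>, \<beta>)) (wlp act C f \<sigma>)"
    and post: "step_postfixpoint H" and hist: "history_indep H"
    and final: "\<And>\<sigma> \<beta>. nat_le (H (None, \<sigma>, \<beta>)) (f \<sigma>)"
  shows "nat_le (H (Some (While \<phi> C), \<sigma>, \<beta>)) (wlp act (While \<phi> C) f \<sigma>)"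
proof -
  \<comment> \<open>History independence is what makes \<open>H\<close> on the loop a function of the state alone,
    as coinduction for the loop's \<open>wlp\<close> requires.\<close>
  define X where "X \<sigma>' = H (Some (While \<phi> C), \<sigma>', [])" for \<sigma>'
  have "nat_le (X \<sigma>') (loop_charfun act \<phi> C f X \<sigma>')" for \<sigma>'
  proof (cases "\<phi> \<sigma>'")
    case True
    have "nat_le (X \<sigma>') ((H \<circ> seq_lift (While \<phi> C)) (Some C, \<sigma>', []))"
      using step_postfixpointD[OF post, of "While \<phi> C" \<sigma>' "[]"] True by (simp add: X_def step_sum_def)
    also have "nat_le \<dots> (wlp act C X \<sigma>')"
    proof (rule body)
      show "step_postfixpoint (H \<circ> seq_lift (While \<phi> C))"
        using post by (rule step_postfixpoint_seq_lift)
      show "history_indep (H \<circ> seq_lift (While \<phi> C))"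
        using hist by (rule history_indep_seq_lift)
      show "nat_le ((H \<circ> seq_lift (While \<phi> C)) (None, \<tau>, \<beta>')) (X \<tau>)" for \<tau> \<beta>'
        using history_indepD[OF hist, of _ _ \<beta>' "[]"] by (simp add: X_def)
    qed
    finally show ?thesis using True by (simp add: loop_charfun_def)
  next
    case False
    have "nat_le (X \<sigma>') (H (None, \<sigma>', []))"
      using step_postfixpointD[OF post, of "While \<phi> C" \<sigma>' "[]"] False by (simp add: X_def step_sum_def)
    also have "nat_le \<dots> (f \<sigma>')"
      by (rule final)
    finally show ?thesis using False by (simp add: loop_charfun_def)
  qed
  then have "fun_nat_le X (wlp act (While \<phi> C) f)"
    by (intro wlp_While_coinduct wlp_mono wlp_inf_continuous) (simp add: fun_nat_le_def)
  then show ?thesis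
    using history_indepD[OF hist, of _ _ \<beta> "[]"] by (simp add: X_def fun_nat_le_def)
qed

lemma step_postfixpoint_le_wlp:
  assumes "step_postfixpoint H" and "history_indep H"
    and "\<And>\<sigma> \<beta>. nat_le (H (None, \<sigma>, \<beta>)) (f \<sigma>)"
  shows "nat_le (H (Some C, \<sigma>, \<beta>)) (wlp act C f \<sigma>)"
  using assms
proof (induction C arbitrary: H f \<sigma> \<beta>)
  case (Assign x e)
  have "nat_le (H (Some (Assign x e), \<sigma>, \<beta>)) (H (None, \<sigma>(x := e \<sigma>), \<beta>))"
    using step_postfixpointD[OF Assign.prems(1), of "Assign x e" \<sigma> \<beta>] by (simp add: step_sum_def)
  also have "nat_le \<dots> (wlp act (Assign x e) f \<sigma>)"
    using Assign.prems(3) by simp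
  finally show ?case .
next
  case (Weight w)
  have "nat_le (H (Some (Weight w), \<sigma>, \<beta>)) (act w (H (None, \<sigma>, \<beta>)))"
    using step_postfixpointD[OF Weight.prems(1), of "Weight w" \<sigma> \<beta>] by (simp add: step_sum_def)
  also have "nat_le \<dots> (wlp act (Weight w) f \<sigma>)"
    using Weight.prems(3) by (simp add: act_nat_le_mono)
  finally show ?case .
next
  case (Ite \<phi> C1 C2)
  have "nat_le (H (Some (Ite \<phi> C1 C2), \<sigma>, \<beta>)) (H (Some (if \<phi> \<sigma> then C1 else C2), \<sigma>, \<beta>))"
    using step_postfixpointD[OF Ite.prems(1), of "Ite \<phi> C1 C2" \<sigma> \<beta>] by (simp add: step_sum_def)
  also have "nat_le \<dots> (wlp act (Ite \<phi> C1 C2) f \<sigma>)"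
    using Ite.IH[OF Ite.prems] by simp
  finally show ?case .
next
  case (Branch C1 C2)
  have "nat_le (H (Some (Branch C1 C2), \<sigma>, \<beta>)) (H (Some C1, \<sigma>, \<beta> @ [True]) + H (Some C2, \<sigma>, \<beta> @ [False]))"
    using step_postfixpointD[OF Branch.prems(1), of "Branch C1 C2" \<sigma> \<beta>] by (simp add: step_sum_def)
  also have "nat_le \<dots> (wlp act (Branch C1 C2) f \<sigma>)"
    using Branch.IH[OF Branch.prems] by (simp add: nat_le_add)
  finally show ?case .
next
  case (Seq C1 C2)
  have "nat_le ((H \<circ> seq_lift C2) (Some C1, \<sigma>, \<beta>)) (wlp act C1 (wlp act C2 f) \<sigma>)"
    using Seq.prems Seq.IH(2)[OF Seq.prems]
    by (intro Seq.IH(1) step_postfixpoint_seq_lift history_indep_seq_lift) simp_all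
  then show ?case by simp
next
  case (While \<phi> C)
  from While.IH While.prems show ?case by (rule step_postfixpoint_le_wlp_While)
qed

definition path_inf :: "('x, 'v, 'm) config \<Rightarrow> 's" where
  "path_inf c = nat_Inf (range (\<lambda>n. path_sum n c))"

lemma path_sum_dec_chain: "nat_dec_chain (\<lambda>n. path_sum n c)"
  unfolding nat_dec_chain_def by (simp add: path_sum_Suc_le)

lemma path_inf_glb: "is_nat_glb (range (\<lambda>n. path_sum n c)) (path_inf c)"
  unfolding path_inf_def by (rule is_nat_glb_nat_Inf[OF path_sum_dec_chain])

lemma path_inf_unfold: "path_inf c = step_sum path_inf c"
proof -
  have "is_nat_glb (range (\<lambda>n. step_sum (path_sum n) c)) (step_sum path_inf c)"
    unfolding step_sum_def
    by (intro is_nat_glb_sum finite_succs is_nat_glb_act path_sum_dec_chain path_inf_glb)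
      (simp add: nat_dec_chain_def act_nat_le_mono path_sum_Suc_le)
  moreover have "is_nat_glb (range (\<lambda>n. step_sum (path_sum n) c)) (path_inf c)"
    using is_nat_glb_Suc[OF path_sum_dec_chain path_inf_glb] by (simp add: path_sum_Suc)
  ultimately show ?thesis by (rule is_nat_glb_unique[symmetric])
qed

lemma path_inf_None: "path_inf (None, \<sigma>, \<beta>) = 0"
  by (subst path_inf_unfold) (simp add: step_sum_def)

lemma path_inf_history_indep: "history_indep (path_inf :: ('x, 'v, 'm) config \<Rightarrow> 's)"
  unfolding history_indep_def path_inf_def
proof (intro allI)
  fix c :: "('x, 'v, 'm) wgcl option" and \<sigma> \<beta> \<beta>'
  have "(\<lambda>n. path_sum n (c, \<sigma>, \<beta>)) = (\<lambda>n. path_sum n (c, \<sigma>, \<beta>'))"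
    by (intro ext history_indepD[OF path_sum_history_indep])
  then show "nat_Inf (range (\<lambda>n. path_sum n (c, \<sigma>, \<beta>))) = nat_Inf (range (\<lambda>n. path_sum n (c, \<sigma>, \<beta>')))"
    by (rule arg_cong[where f="\<lambda>g. nat_Inf (range g)"])
qed

lemma wlp_zero_is_nat_glb_path_sums:
  "is_nat_glb (range (\<lambda>n. path_sum n (Some C, \<sigma>, []))) (wlp act C (\<lambda>_. 0) \<sigma>)"
  unfolding is_nat_glb_def
proof safe
  show "nat_le (wlp act C (\<lambda>_. 0) \<sigma>) (path_sum n (Some C, \<sigma>, []))" for n
    using config_wlp_le_path_sum[of "(Some C, \<sigma>, [])" n] by simp
next
  fix u assume "\<forall>s\<in>range (\<lambda>n. path_sum n (Some C, \<sigma>, [])). nat_le u s"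
  then have "nat_le u (path_inf (Some C, \<sigma>, []))"
    using path_inf_glb unfolding is_nat_glb_def by blast
  also have "nat_le \<dots> (wlp act C (\<lambda>_. 0) \<sigma>)"
    by (rule step_postfixpoint_le_wlp)
      (simp_all add: step_postfixpoint_def path_inf_history_indep path_inf_None flip: path_inf_unfold)
  finally show "nat_le u (wlp act C (\<lambda>_. 0) \<sigma>)" .
qed

end

theorem mainTheorem6:
  fixes act :: "'m::monoid_mult \<Rightarrow> 's::comm_monoid_add \<Rightarrow> 's"
    and C :: "('x, 'v, 'm) wgcl"
    and \<sigma> :: "'x \<Rightarrow> 'v"
  assumes "monoid_module act"
    and "omega_bicontinuous act"
  shows "wlp act C (\<lambda>_. 0) \<sigma> =
    nat_Inf (range (\<lambda>n. \<Sum>\<pi>\<in>paths n (Some C, \<sigma>, []). act (wgt \<pi>) nat_top))"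
proof -
  interpret bicontinuous_module act
    using assms by (rule bicontinuous_module.intro)
  have "nat_Inf (range (\<lambda>n. path_sum n (Some C, \<sigma>, []))) = wlp act C (\<lambda>_. 0) \<sigma>"
    by (rule nat_Inf_eqI[OF wlp_zero_is_nat_glb_path_sums])
  then show ?thesis
    unfolding path_sum_def by (rule sym)
qed

end
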